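(* Let $R$ be a finite commutative principal ideal ring with unity. Suppose that $R$ has exactly two associated prime ideals $p_1,p_2$ (i.e. $\lvert \operatorname{Ass}(R)\rvert=2$) and that $p_1\cap p_2=\{0\}$. Then the complement $\overline{\Gamma(R)}$ of the zero divisor graph of $R$ is a divisor graph.
   Context: $\operatorname{Ass}(R)$ is the set of associated primes of $R$ as an $R$-module, i.e. prime ideals of $R$ of the form $\operatorname{ann}(x)$ for some nonzero $x\in R$. The zero divisor graph $\Gamma(R)$ has vertex set the nonzero zero divisors of $R$, distinct $a,b$ adjacent iff $ab=0$; its complement $\overline{\Gamma(R)}$ has the same vertex set with distinct $a,b$ adjacent iff $ab\neq 0$. For a nonempty set $T$ of positive integers, the divisor graph $G(T)$ has vertex set $T$, with distinct $i,j$ adjacent iff $i\mid j$ or $j\mid i$; a graph is a divisor graph if it is isomorphic to some $G(T)$. *)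

theory Defs
  imports Main
begin

definition is_ideal :: "'a::comm_ring_1 set \<Rightarrow> bool" where
  "is_ideal I \<longleftrightarrow> 0 \<in> I \<and> (\<forall>x\<in>I. \<forall>y\<in>I. x + y \<in> I) \<and> (\<forall>x\<in>I. - x \<in> I)
     \<and> (\<forall>r x. x \<in> I \<longrightarrow> r * x \<in> I)"

definition principal_ideal_ring :: "'a::comm_ring_1 itself \<Rightarrow> bool" where
  "principal_ideal_ring _ \<longleftrightarrow> (\<forall>I::'a set. is_ideal I \<longrightarrow> (\<exists>a. I = {r * a | r. True}))"

definition is_prime_ideal :: "'a::comm_ring_1 set \<Rightarrow> bool" where
  "is_prime_ideal P \<longleftrightarrow> is_ideal P \<and> P \<noteq> UNIV \<and> (\<forall>a b. a * b \<in> P \<longrightarrow> a \<in> P \<or> b \<in> P)"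

definition ann :: "'a::comm_ring_1 \<Rightarrow> 'a set" where
  "ann x = {r. r * x = 0}"

definition Ass :: "'a::comm_ring_1 itself \<Rightarrow> 'a set set" where
  "Ass _ = {P. is_prime_ideal P \<and> (\<exists>x. x \<noteq> 0 \<and> P = ann x)}"

definition zd_vertices :: "'a::comm_ring_1 itself \<Rightarrow> 'a set" where
  "zd_vertices _ = {a. a \<noteq> 0 \<and> (\<exists>b. b \<noteq> 0 \<and> a * b = 0)}"

definition comp_zd_adj :: "'a::comm_ring_1 \<Rightarrow> 'a \<Rightarrow> bool" where
  "comp_zd_adj a b \<longleftrightarrow> a \<noteq> b \<and> a * b \<noteq> 0"

definition divisor_graph :: "'v set \<Rightarrow> ('v \<Rightarrow> 'v \<Rightarrow> bool) \<Rightarrow> bool" where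
  "divisor_graph V adj \<longleftrightarrow> (\<exists>(T::nat set) f. T \<noteq> {} \<and> (\<forall>t\<in>T. 0 < t) \<and> bij_betw f V T \<and>
     (\<forall>a\<in>V. \<forall>b\<in>V. adj a b \<longleftrightarrow> (f a \<noteq> f b \<and> (f a dvd f b \<or> f b dvd f a))))"

end

theory Submission
  imports Defs
begin

text \<open>A maximal annihilator of a nonzero element is prime, so in a finite ring every nonzero zero
  divisor lies in an associated prime, and the vertices of the zero divisor graph are the nonzero
  elements of the two primes. Since the primes meet only in 0, two nonzero elements multiply to 0
  exactly when they lie in different primes, so the complement graph is a disjoint union of two
  cliques. Sending one clique injectively to powers of 2 and the other to powers of 3 realises it
  as a divisor graph.\<close>

lemma ann_maximal_is_prime_ideal:
  fixes c :: "'a::comm_ring_1"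
  assumes "c \<noteq> 0"
    and maximal: "\<And>d. d \<noteq> 0 \<Longrightarrow> ann c \<subseteq> ann d \<Longrightarrow> ann d = ann c"
  shows "is_prime_ideal (ann c)"
  unfolding is_prime_ideal_def is_ideal_def
proof (intro conjI allI impI ballI)
  have "1 \<notin> ann c" using \<open>c \<noteq> 0\<close> by (simp add: ann_def)
  then show "ann c \<noteq> UNIV" by blast
next
  fix x y assume "x * y \<in> ann c"
  show "x \<in> ann c \<or> y \<in> ann c"
  proof (cases "x \<in> ann c")
    case False
    then have "x * c \<noteq> 0" by (simp add: ann_def mult.commute)
    moreover have "ann c \<subseteq> ann (x * c)"
      by (auto simp: ann_def mult.left_commute[of _ x])
    ultimately have "ann (x * c) = ann c" using maximal by blast
    moreover have "y \<in> ann (x * c)"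
      using \<open>x * y \<in> ann c\<close> by (simp add: ann_def algebra_simps)
    ultimately show ?thesis by simp
  qed simp
qed (auto simp: ann_def algebra_simps)

lemma zero_divisor_in_Ass:
  fixes a b :: "'a::{comm_ring_1, finite}"
  assumes "a * b = 0" "b \<noteq> 0"
  shows "\<exists>P\<in>Ass TYPE('a). a \<in> P"
proof -
  let ?S = "{ann c | c. c \<noteq> 0 \<and> a \<in> ann c}"
  have "ann b \<in> ?S" using assms by (auto simp: ann_def mult.commute)
  then have "?S \<noteq> {}" by blast
  then obtain M where "M \<in> ?S" and maximal: "\<forall>X\<in>?S. M \<le> X \<longrightarrow> M = X"
    using finite_has_maximal[of ?S] by auto
  then obtain c where c: "c \<noteq> 0" "a \<in> ann c" "M = ann c" by blast
  have "is_prime_ideal (ann c)"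
    using c maximal by (intro ann_maximal_is_prime_ideal) auto
  then show ?thesis using c by (auto simp: Ass_def)
qed

lemma zd_vertices_eq_Union_Ass:
  "zd_vertices TYPE('a::{comm_ring_1, finite}) = \<Union>(Ass TYPE('a)) - {0}"
proof
  show "zd_vertices TYPE('a) \<subseteq> \<Union>(Ass TYPE('a)) - {0}"
    using zero_divisor_in_Ass by (fastforce simp: zd_vertices_def)
  show "\<Union>(Ass TYPE('a)) - {0} \<subseteq> zd_vertices TYPE('a)"
    by (auto simp: zd_vertices_def Ass_def ann_def)
qed

lemma mult_eq_0_iff_separated_by_primes:
  fixes P Q :: "'a::comm_ring_1 set"
  assumes "is_prime_ideal P" "is_prime_ideal Q" "P \<inter> Q = {0}"
    and "a \<in> P \<union> Q" "b \<in> P \<union> Q" "a \<noteq> 0" "b \<noteq> 0"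
  shows "a * b = 0 \<longleftrightarrow> \<not> (a \<in> P \<longleftrightarrow> b \<in> P)"
proof -
  have "0 \<in> P" "0 \<in> Q" and absorb: "\<And>r x. x \<in> P \<Longrightarrow> r * x \<in> P" "\<And>r x. x \<in> Q \<Longrightarrow> r * x \<in> Q"
    and prime: "\<And>x y. x * y \<in> P \<Longrightarrow> x \<in> P \<or> y \<in> P" "\<And>x y. x * y \<in> Q \<Longrightarrow> x \<in> Q \<or> y \<in> Q"
    using assms(1,2) by (auto simp: is_prime_ideal_def is_ideal_def)
  have "a * b \<in> P" if "a \<in> P \<or> b \<in> P"
    using that absorb(1)[of a b] absorb(1)[of b a] by (auto simp: mult.commute)
  moreover have "a * b \<in> Q" if "a \<in> Q \<or> b \<in> Q"
    using that absorb(2)[of a b] absorb(2)[of b a] by (auto simp: mult.commute)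
  moreover have "a * b \<noteq> 0" if "a \<in> P \<longleftrightarrow> b \<in> P"
    using that prime \<open>0 \<in> P\<close> \<open>0 \<in> Q\<close> assms(3-7) by (metis IntI empty_iff insert_iff)
  ultimately show ?thesis using assms(3-5) by blast
qed

lemma coprime_power_not_dvd:
  fixes a b :: nat
  assumes "coprime a b" "a \<noteq> 1"
  shows "\<not> a ^ Suc m dvd b ^ Suc n"
proof
  assume "a ^ Suc m dvd b ^ Suc n"
  moreover have "coprime (a ^ Suc m) (b ^ Suc n)" using assms(1) by simp
  ultimately have "is_unit (a ^ Suc m)" using coprime_absorb_left by blast
  then show False using assms(2) by simp
qed

lemma divisor_graph_two_cliques:
  fixes V A :: "'v set"
  assumes "finite V" "V \<noteq> {}"
    and adj: "\<And>a b. a \<in> V \<Longrightarrow> b \<in> V \<Longrightarrow> adj a b \<longleftrightarrow> a \<noteq> b \<and> (a \<in> A \<longleftrightarrow> b \<in> A)"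
  shows "divisor_graph V adj"
proof -
  obtain g :: "'v \<Rightarrow> nat" where "inj_on g V"
    using finite_imp_inj_to_nat_seg[OF \<open>finite V\<close>] by meson
  define f :: "'v \<Rightarrow> nat" where "f v = (if v \<in> A then 2 ^ Suc (g v) else 3 ^ Suc (g v))" for v
  have powers_comparable: "k ^ i dvd k ^ j \<or> k ^ j dvd k ^ i" for k i j :: nat
    by (metis le_imp_power_dvd nat_le_linear)
  have "\<not> (2::nat) ^ Suc i dvd 3 ^ Suc j" "\<not> (3::nat) ^ Suc j dvd 2 ^ Suc i" for i j
    by (simp_all add: coprime_power_not_dvd del: power_Suc)
  then have dvd_iff: "f a dvd f b \<or> f b dvd f a \<longleftrightarrow> (a \<in> A \<longleftrightarrow> b \<in> A)" for a b
    using powers_comparable by (auto simp: f_def simp del: power_Suc)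
  have "inj_on f V"
  proof (rule inj_onI)
    fix a b assume "a \<in> V" "b \<in> V" "f a = f b"
    then have "a \<in> A \<longleftrightarrow> b \<in> A" using dvd_iff[of a b] by simp
    then have "g a = g b" using \<open>f a = f b\<close> by (auto simp: f_def split: if_splits)
    then show "a = b" using \<open>inj_on g V\<close> \<open>a \<in> V\<close> \<open>b \<in> V\<close> by (auto dest: inj_onD)
  qed
  show ?thesis
    unfolding divisor_graph_def
  proof (intro exI conjI ballI)
    show "f ` V \<noteq> {}" "bij_betw f V (f ` V)"
      using \<open>V \<noteq> {}\<close> \<open>inj_on f V\<close> by (simp_all add: bij_betw_def)
    show "0 < t" if "t \<in> f ` V" for t
      using that by (auto simp: f_def)
    show "adj a b \<longleftrightarrow> f a \<noteq> f b \<and> (f a dvd f b \<or> f b dvd f a)" if "a \<in> V" "b \<in> V" for a b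
      using that adj dvd_iff inj_on_eq_iff[OF \<open>inj_on f V\<close>] by auto
  qed
qed

theorem theorem2p8:
  assumes pir: "principal_ideal_ring TYPE('a::{comm_ring_1, finite})"
    and two: "card (Ass TYPE('a)) = 2"
    and p12: "Ass TYPE('a) = {p1, p2}"
    and inter: "p1 \<inter> p2 = {0}"
  shows "divisor_graph (zd_vertices TYPE('a)) (comp_zd_adj :: 'a \<Rightarrow> 'a \<Rightarrow> bool)"
proof -
  have V: "zd_vertices TYPE('a) = (p1 \<union> p2) - {0}"
    using zd_vertices_eq_Union_Ass[where 'a = 'a] p12 by simp
  have primes: "is_prime_ideal p1" "is_prime_ideal p2"
    using p12 by (auto simp: Ass_def)
  have "p1 \<noteq> p2" using two p12 by auto
  then have "zd_vertices TYPE('a) \<noteq> {}"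
    using inter V by blast
  moreover have "comp_zd_adj a b \<longleftrightarrow> a \<noteq> b \<and> (a \<in> p1 \<longleftrightarrow> b \<in> p1)"
    if "a \<in> zd_vertices TYPE('a)" "b \<in> zd_vertices TYPE('a)" for a b
    using that V mult_eq_0_iff_separated_by_primes[OF primes inter] by (auto simp: comp_zd_adj_def)
  ultimately show ?thesis
    by (intro divisor_graph_two_cliques) auto
qed

end
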